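(* Let $p,q$ be distinct positive integers and $n\ge1$. For every $x\in\{p,q\}^n$ and every sequence $s=(s_1,\dots,s_m)$, $m\ge1$, of elements of $\{p,q\}$, $$RLD^{p,q}_n(x, s_{1:m}) = RLD^{p,q}_n(y_1,(s_1))\circ RLD^{p,q}_n(y_2,(s_2))\circ\cdots\circ RLD^{p,q}_n(y_m,(s_m)),$$ where $\circ$ denotes concatenation, $y_1=x$, and $y_i=A^{p,q}_n(y_{i-1},(s_{i-1}))$ for $1<i\le m$.
   Context: Let $p,q$ be distinct positive integers. Define $\mathrm{Opp}(p)=q$, $\mathrm{Opp}(q)=p$. For $x\in\{p,q\}$ and a finite sequence $s=(s_1,\dots,s_m)$ of positive integers, $RLD^{p,q}(x,s)$ is the sequence over $\{p,q\}$ consisting of $s_1$ copies of $x$, then $s_2$ copies of $\mathrm{Opp}(x)$, then $s_3$ copies of $x$, and so on alternately. For $n\ge1$ and $x=(x_1,\dots,x_n)\in\{p,q\}^n$: $RLD^{p,q}_1(x_1,s)=RLD^{p,q}(x_1,s)$ and $RLD^{p,q}_n(x_{1:n},s)=RLD^{p,q}(x_n, RLD^{p,q}_{n-1}(x_{1:n-1},s))$. For a nonempty sequence $t$ over $\{p,q\}$, $\mathrm{OppEnd}(t)=\mathrm{Opp}(\text{last entry of } t)$. The automaton $A^{p,q}_n$ has state set $\{p,q\}^n$; for a state $x$ and a nonempty finite sequence $s$ over $\{p,q\}$, $A^{p,q}_n(x,s)$ is the state whose $i$-th coordinate is $\mathrm{OppEnd}(RLD^{p,q}_i(x_{1:i},s))$,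 $i=1,\dots,n$. *)

theory Defs
  imports Main
begin

definition Opp :: "nat \<Rightarrow> nat \<Rightarrow> nat \<Rightarrow> nat" where
  "Opp p q x = (if x = p then q else p)"

fun RLD :: "nat \<Rightarrow> nat \<Rightarrow> nat \<Rightarrow> nat list \<Rightarrow> nat list" where
  "RLD p q x [] = []"
| "RLD p q x (k # ks) = replicate k x @ RLD p q (Opp p q x) ks"

definition RLDn :: "nat \<Rightarrow> nat \<Rightarrow> nat list \<Rightarrow> nat list \<Rightarrow> nat list" where
  "RLDn p q xs s = foldl (\<lambda>t x. RLD p q x t) s xs"

definition OppEnd :: "nat \<Rightarrow> nat \<Rightarrow> nat list \<Rightarrow> nat" where
  "OppEnd p q t = Opp p q (last t)"

definition Aut :: "nat \<Rightarrow> nat \<Rightarrow> nat list \<Rightarrow> nat list \<Rightarrow> nat list" where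
  "Aut p q x s = map (\<lambda>i. OppEnd p q (RLDn p q (take (Suc i) x) s)) [0..<length x]"

fun states :: "nat \<Rightarrow> nat \<Rightarrow> nat list \<Rightarrow> nat list \<Rightarrow> nat list list" where
  "states p q y [] = []"
| "states p q y (c # cs) = y # states p q (Aut p q y [c]) cs"

end

theory Submission
  imports Defs
begin

text \<open>Run-length decoding respects concatenation: RLD x (a @ b) is RLD x a followed by the
  decoding of b started from the letter reached after length a alternations, and when the last
  run of RLD x a is nonempty that letter is OppEnd (RLD x a). Applying this at every level of
  RLDn, the continuation of RLDn x (a @ b) after RLDn x a is decoded from the state whose i-th
  letter is the OppEnd of the i-th level, i.e. from Aut x a. Peeling off the letters of s one at
  a time yields the factorisation along the run of the automaton.\<close>

lemma RLD_append:
  "RLD p q x (a @ b) = RLD p q x a @ RLD p q ((Opp p q ^^ length a) x) b"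
  by (induction a arbitrary: x) (simp_all add: funpow_swap1)

lemma RLD_eq_Nil_iff: "RLD p q x a = [] \<longleftrightarrow> (\<forall>k\<in>set a. k = 0)"
  by (induction a arbitrary: x) auto

lemma set_RLD_subset:
  assumes "x \<in> {p, q}"
  shows "set (RLD p q x a) \<subseteq> {p, q}"
  using assms by (induction a arbitrary: x) (auto simp: Opp_def)

lemma OppEnd_RLD:
  assumes "a \<noteq> []" "last a \<noteq> 0"
  shows "OppEnd p q (RLD p q x a) = (Opp p q ^^ length a) x"
proof -
  obtain m where m: "length a = Suc m"
    using assms(1) by (cases a) auto
  have "a = butlast a @ [last a]"
    using assms(1) by simp
  then have "RLD p q x a = RLD p q x (butlast a) @ replicate (last a) ((Opp p q ^^ m) x)"
    by (metis RLD.simps RLD_append append_Nil2 length_butlast m diff_Suc_1)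
  then show ?thesis
    using assms(2) m by (simp add: OppEnd_def)
qed

lemma RLDn_Nil: "RLDn p q xs [] = []"
  by (induction xs rule: rev_induct) (simp_all add: RLDn_def)

lemma RLDn_snoc: "RLDn p q (xs @ [y]) s = RLD p q y (RLDn p q xs s)"
  by (simp add: RLDn_def)

lemma set_RLDn_subset:
  assumes "set xs \<subseteq> {p, q}" "set s \<subseteq> {p, q}"
  shows "set (RLDn p q xs s) \<subseteq> {p, q}"
  using assms(1)
proof (induction xs rule: rev_induct)
  case Nil
  then show ?case using assms(2) by (simp add: RLDn_def)
next
  case (snoc y xs)
  then show ?case by (simp add: RLDn_snoc set_RLD_subset)
qed

lemma RLDn_eq_Nil_iff:
  assumes "p > 0" "q > 0" "set xs \<subseteq> {p, q}" "set s \<subseteq> {p, q}"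
  shows "RLDn p q xs s = [] \<longleftrightarrow> s = []"
  using assms(3)
proof (induction xs rule: rev_induct)
  case Nil
  then show ?case by (simp add: RLDn_def)
next
  case (snoc y xs)
  have "\<forall>k\<in>set (RLDn p q xs s). k \<noteq> 0"
    using set_RLDn_subset[of xs p q s] snoc.prems assms by auto
  then have "RLDn p q (xs @ [y]) s = [] \<longleftrightarrow> RLDn p q xs s = []"
    by (cases "RLDn p q xs s") (auto simp: RLDn_snoc RLD_eq_Nil_iff)
  then show ?case
    using snoc by simp
qed

lemma Aut_snoc:
  "Aut p q (xs @ [y]) s = Aut p q xs s @ [OppEnd p q (RLDn p q (xs @ [y]) s)]"
  unfolding Aut_def by simp

lemma set_Aut_subset: "set (Aut p q xs s) \<subseteq> {p, q}"
  unfolding Aut_def OppEnd_def Opp_def by auto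

lemma RLDn_append:
  assumes "p > 0" "q > 0" "set xs \<subseteq> {p, q}" "a \<noteq> []" "set a \<subseteq> {p, q}"
  shows "RLDn p q xs (a @ b) = RLDn p q xs a @ RLDn p q (Aut p q xs a) b"
  using assms(3)
proof (induction xs rule: rev_induct)
  case Nil
  then show ?case by (simp add: RLDn_def Aut_def)
next
  case (snoc y xs)
  let ?t = "RLDn p q xs a"
  have "set ?t \<subseteq> {p, q}" "?t \<noteq> []"
    using set_RLDn_subset RLDn_eq_Nil_iff snoc.prems assms by auto
  then have "last ?t \<noteq> 0"
    using assms(1,2) last_in_set by fastforce
  then have flip: "(Opp p q ^^ length ?t) y = OppEnd p q (RLDn p q (xs @ [y]) a)"
    using \<open>?t \<noteq> []\<close> by (simp add: RLDn_snoc OppEnd_RLD)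
  have "RLDn p q (xs @ [y]) (a @ b) = RLD p q y (?t @ RLDn p q (Aut p q xs a) b)"
    using snoc by (simp add: RLDn_snoc)
  also have "\<dots> = RLD p q y ?t @ RLD p q ((Opp p q ^^ length ?t) y) (RLDn p q (Aut p q xs a) b)"
    by (rule RLD_append)
  also have "\<dots> = RLDn p q (xs @ [y]) a @ RLDn p q (Aut p q (xs @ [y]) a) b"
    by (simp add: flip RLDn_snoc Aut_snoc)
  finally show ?case .
qed

lemma RLDn_eq_concat_states:
  assumes "p > 0" "q > 0" "set x \<subseteq> {p, q}" "set s \<subseteq> {p, q}"
  shows "RLDn p q x s = concat (map (\<lambda>(y, c). RLDn p q y [c]) (zip (states p q x s) s))"
  using assms(3,4)
proof (induction s arbitrary: x)
  case Nil
  then show ?case by (simp add: RLDn_Nil)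
next
  case (Cons c cs)
  have "RLDn p q x (c # cs) = RLDn p q x [c] @ RLDn p q (Aut p q x [c]) cs"
    using RLDn_append[of p q x "[c]" cs] assms(1,2) Cons.prems by simp
  then show ?case
    using Cons.IH[OF set_Aut_subset] Cons.prems by simp
qed

theorem corollary1:
  fixes p q n :: nat and x s :: "nat list"
  assumes "p > 0" "q > 0" "p \<noteq> q" "n \<ge> 1"
    and "length x = n" "set x \<subseteq> {p, q}"
    and "length s \<ge> 1" "set s \<subseteq> {p, q}"
  shows "RLDn p q x s =
         concat (map (\<lambda>(y, c). RLDn p q y [c]) (zip (states p q x s) s))"
  using RLDn_eq_concat_states assms(1,2,6,8) .

end
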